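(* Let $0<\varepsilon<\pi/2$ and $0<\eta<\min\{\pi/4,\varepsilon/2\}$. Then there exists a constant $c>0$ such that $$c(|\lambda|^{1/2}+\tilde A)^3\le|\det L|\qquad\text{for all }\lambda\in\Sigma_\varepsilon,\ \xi'\in\tilde\Sigma_\eta^{n-1}.$$
   Context: $\rho_\pm,\mu_\pm>0$ are constants. $\Sigma_\varepsilon=\{\lambda\in\mathbb C\setminus\{0\}:|\arg\lambda|<\pi-\varepsilon\}$, $\tilde\Sigma_\eta=\{z\in\mathbb C\setminus\{0\}:|\arg z|<\eta\}\cup\{z\in\mathbb C\setminus\{0\}:\pi-\eta<|\arg z|\}$, and $\xi'=(\xi_1,\dots,\xi_{n-1})\in\tilde\Sigma_\eta^{n-1}$. Set $A=\sqrt{\sum_{j=1}^{n-1}\xi_j^2}$, $B_\pm=\sqrt{\rho_\pm\mu_\pm^{-1}\lambda+A^2}$ (square roots with positive real part), $\tilde A=\sqrt{\sum_{j=1}^{n-1}|\xi_j|^2}$, and $$L=\begin{bmatrix}\mu_+(B_++A)&\mu_+(B_+^2+A^2)&-\mu_-(B_-+A)&-\mu_-(B_-^2+A^2)\\ \mu_+(B_+-A)&-2\mu_+AB_+&\mu_-(B_--A)&-2\mu_-AB_-\\ 1&B_+&1&B_-\\ 0&1&0&-1\end{bmatrix}.$$ *)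

theory Defs
  imports "HOL-Analysis.Analysis"
begin

definition Sigma_sec :: "real \<Rightarrow> complex set" where
  "Sigma_sec \<epsilon> = {lam. lam \<noteq> 0 \<and> \<bar>Arg lam\<bar> < pi - \<epsilon>}"

definition Sigma_tilde :: "real \<Rightarrow> complex set" where
  "Sigma_tilde \<eta> = {z. z \<noteq> 0 \<and> (\<bar>Arg z\<bar> < \<eta> \<or> pi - \<eta> < \<bar>Arg z\<bar>)}"

definition A_sym :: "complex ^ 'm \<Rightarrow> complex" where
  "A_sym \<xi> = csqrt (\<Sum>j\<in>UNIV. (\<xi> $ j)^2)"

definition B_sym :: "real \<Rightarrow> real \<Rightarrow> complex \<Rightarrow> complex ^ 'm \<Rightarrow> complex" where
  "B_sym \<rho> \<mu> lam \<xi> = csqrt (complex_of_real (\<rho> / \<mu>) * lam + (A_sym \<xi>)^2)"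

definition A_tilde :: "complex ^ 'm \<Rightarrow> real" where
  "A_tilde \<xi> = sqrt (\<Sum>j\<in>UNIV. (cmod (\<xi> $ j))^2)"

definition L_mat :: "real \<Rightarrow> real \<Rightarrow> real \<Rightarrow> real \<Rightarrow> complex \<Rightarrow> complex ^ 'm \<Rightarrow> complex ^ 4 ^ 4" where
  "L_mat \<rho>p \<rho>m \<mu>p \<mu>m lam \<xi> =
    (let A = A_sym \<xi>; Bp = B_sym \<rho>p \<mu>p lam \<xi>; Bm = B_sym \<rho>m \<mu>m lam \<xi>;
         mp = complex_of_real \<mu>p; mm = complex_of_real \<mu>m in
     vector [
       vector [mp * (Bp + A), mp * (Bp^2 + A^2), - mm * (Bm + A), - mm * (Bm^2 + A^2)],
       vector [mp * (Bp - A), - 2 * mp * A * Bp, mm * (Bm - A), - 2 * mm * A * Bm],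
       vector [1, Bp, 1, Bm],
       vector [0, 1, 0, -1]])"

end

theory Submission
  imports Defs
begin

(*
  Put W = pi - eps + 2 eta < pi. Everything is controlled by arguments: lam has argument phi
  with |phi| < pi - eps and A^2 = sum xi_j^2 has argument s with |s| <= 2 eta, so |phi - s| <= W.
  Hence B_pm = sqrt (rho_pm / mu_pm lam + A^2), A, X = mu_+ B_+ + mu_- A and Y = mu_- B_- + mu_+ A
  all have arguments between phi/2 and s/2, and a sum of numbers in a sector of opening less than
  pi loses at most the factor cos of half the opening. This gives |X|, |Y| >= c (|lam|^(1/2) + |A|)
  and |A| >= cos (2 eta)^(1/2) A_tilde. Using rho_pm lam = mu_pm (B_pm^2 - A^2), the cofactor
  expansion factors as det L = (rho_+ + rho_-) lam (X + Y) + 4 A X Y; after division by X Y the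
  three summands lie in the sector of half-width W/2 around phi/2, so
  |det L| >= cos (W/2) ((rho_+ + rho_-) |lam| (|X| + |Y|) + 4 |A| |X| |Y|),
  which is cubic in |lam|^(1/2) + |A|.
*)

text \<open>The closed sector of all \<open>rcis r t\<close> with \<open>r \<ge> 0\<close> and \<open>a \<le> t \<le> b\<close>; the bounds are
  not reduced modulo \<open>2 * pi\<close>, and \<open>0\<close> lies in every nonempty sector.\<close>
definition sector :: "real \<Rightarrow> real \<Rightarrow> complex set" where
  "sector a b = {z. \<exists>t. a \<le> t \<and> t \<le> b \<and> z = rcis (cmod z) t}"

lemma rcis_in_sector: "0 \<le> r \<Longrightarrow> a \<le> t \<Longrightarrow> t \<le> b \<Longrightarrow> rcis r t \<in> sector a b"
  by (auto simp: sector_def)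

lemma sectorE:
  assumes "z \<in> sector a b"
  obtains r t where "0 \<le> r" "a \<le> t" "t \<le> b" "z = rcis r t"
  using assms norm_ge_zero unfolding sector_def by blast

lemma sector_mono: "a' \<le> a \<Longrightarrow> b \<le> b' \<Longrightarrow> sector a b \<subseteq> sector a' b'"
  by (auto elim!: sectorE intro!: rcis_in_sector)

lemma of_real_mult_in_sector:
  assumes "z \<in> sector a b" "0 \<le> c"
  shows "of_real c * z \<in> sector a b"
proof -
  obtain r t where "0 \<le> r" "a \<le> t" "t \<le> b" and z: "z = rcis r t"
    using assms(1) by (rule sectorE)
  have "of_real c * z = rcis (c * r) t"
    by (simp add: z rcis_def mult.assoc)
  with \<open>0 \<le> r\<close> \<open>a \<le> t\<close> \<open>t \<le> b\<close> assms(2) show ?thesis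
    by (simp add: rcis_in_sector)
qed

lemma mult_cis_in_sector:
  assumes "z \<in> sector a b"
  shows "z * cis c \<in> sector (a + c) (b + c)"
proof -
  obtain r t where "0 \<le> r" "a \<le> t" "t \<le> b" and z: "z = rcis r t"
    using assms by (rule sectorE)
  have "z * cis c = rcis r (t + c)"
    by (simp add: z rcis_def mult.assoc cis_mult)
  with \<open>0 \<le> r\<close> \<open>a \<le> t\<close> \<open>t \<le> b\<close> show ?thesis
    by (simp add: rcis_in_sector)
qed

lemma divide_in_sector:
  assumes "z \<in> sector a b" "0 \<le> r"
  shows "rcis r c / z \<in> sector (c - b) (c - a)"
proof -
  obtain \<rho> t where "0 \<le> \<rho>" "a \<le> t" "t \<le> b" and z: "z = rcis \<rho> t"
    using assms(1) by (rule sectorE)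
  have "rcis r c / z = rcis (r / \<rho>) (c - t)"
    by (simp add: z rcis_divide)
  with \<open>0 \<le> \<rho>\<close> \<open>a \<le> t\<close> \<open>t \<le> b\<close> assms(2) show ?thesis
    by (simp add: rcis_in_sector)
qed

lemma Re_mult_cis_ge_in_sector:
  assumes "z \<in> sector (m - \<delta>) (m + \<delta>)" "\<delta> \<le> pi"
  shows "cos \<delta> * cmod z \<le> Re (z * cis (- m))"
proof -
  obtain r t where "0 \<le> r" "m - \<delta> \<le> t" "t \<le> m + \<delta>" and z: "z = rcis r t"
    using assms(1) by (rule sectorE)
  have "cos \<delta> \<le> cos \<bar>t - m\<bar>"
    using \<open>m - \<delta> \<le> t\<close> \<open>t \<le> m + \<delta>\<close> assms(2) by (intro cos_monotone_0_pi_le) auto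
  then have "cos \<delta> * r \<le> r * cos (t - m)"
    using \<open>0 \<le> r\<close> by (simp add: mult.commute mult_left_mono)
  also have "\<dots> = Re (z * cis (- m))"
    by (simp add: z rcis_def cis_mult cos_diff algebra_simps)
  finally show ?thesis
    using \<open>0 \<le> r\<close> by (simp add: z)
qed

lemma sector_subset_centered:
  assumes "b - a \<le> 2 * \<delta>"
  shows "sector a b \<subseteq> sector ((a + b) / 2 - \<delta>) ((a + b) / 2 + \<delta>)"
  using assms by (intro sector_mono) (simp_all add: field_simps)

lemma norm_add_ge_in_sector:
  assumes "z \<in> sector a b" "w \<in> sector a b" "b - a \<le> 2 * \<delta>" "\<delta> \<le> pi"
  shows "cos \<delta> * (cmod z + cmod w) \<le> cmod (z + w)"
proof -
  define m where "m = (a + b) / 2"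
  have "cos \<delta> * (cmod z + cmod w) \<le> Re (z * cis (- m)) + Re (w * cis (- m))"
    unfolding distrib_left m_def using assms sector_subset_centered[OF assms(3)]
    by (intro add_mono Re_mult_cis_ge_in_sector) auto
  also have "\<dots> \<le> cmod ((z + w) * cis (- m))"
    by (metis complex_Re_le_cmod distrib_right plus_complex.sel(1))
  finally show ?thesis
    by (simp add: norm_mult)
qed

lemma norm_sum_ge_in_sector:
  assumes "finite I" "\<And>i. i \<in> I \<Longrightarrow> z i \<in> sector a b" "b - a \<le> 2 * \<delta>" "\<delta> \<le> pi"
  shows "cos \<delta> * (\<Sum>i\<in>I. cmod (z i)) \<le> cmod (\<Sum>i\<in>I. z i)"
proof -
  define m where "m = (a + b) / 2"
  have "cos \<delta> * (\<Sum>i\<in>I. cmod (z i)) \<le> (\<Sum>i\<in>I. Re (z i * cis (- m)))"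
    unfolding sum_distrib_left m_def using assms sector_subset_centered[OF assms(3)]
    by (intro sum_mono Re_mult_cis_ge_in_sector) auto
  also have "\<dots> \<le> cmod ((\<Sum>i\<in>I. z i) * cis (- m))"
    by (metis Re_sum complex_Re_le_cmod sum_distrib_right)
  finally show ?thesis
    by (simp add: norm_mult)
qed

lemma sector_symmetric_iff:
  assumes "0 \<le> h" "h < pi / 2"
  shows "z \<in> sector (- h) h \<longleftrightarrow> 0 \<le> Re z \<and> 0 \<le> Im (z * cis h) \<and> Im (z * cis (- h)) \<le> 0"
proof
  assume "z \<in> sector (- h) h"
  then obtain r t where "0 \<le> r" "- h \<le> t" "t \<le> h" and z: "z = rcis r t"
    by (rule sectorE)
  have "0 \<le> cos t" "0 \<le> sin (t + h)" "0 \<le> sin (h - t)"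
    using \<open>- h \<le> t\<close> \<open>t \<le> h\<close> assms by (auto intro!: cos_ge_zero sin_ge_zero)
  moreover have "Im (z * cis h) = r * sin (t + h)" "Im (z * cis (- h)) = - (r * sin (h - t))"
    by (simp_all add: z rcis_def cis_mult sin_add sin_diff algebra_simps)
  ultimately show "0 \<le> Re z \<and> 0 \<le> Im (z * cis h) \<and> Im (z * cis (- h)) \<le> 0"
    using \<open>0 \<le> r\<close> by (simp add: z)
next
  assume lin: "0 \<le> Re z \<and> 0 \<le> Im (z * cis h) \<and> Im (z * cis (- h)) \<le> 0"
  define r t where "r = cmod z" and "t = Arg z"
  have z: "z = rcis r t"
    by (simp add: r_def t_def rcis_cmod_Arg)
  show "z \<in> sector (- h) h"
  proof (cases "z = 0")
    case True
    then show ?thesis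
      using rcis_in_sector[of 0 "- h" 0 h] assms by simp
  next
    case False
    have t_bound: "\<bar>t\<bar> \<le> pi / 2"
      using lin Arg_Re_nonneg t_def by blast
    have "Im (z * cis h) = r * sin (t + h)" "Im (z * cis (- h)) = r * sin (t - h)"
      by (simp_all add: z rcis_def cis_mult sin_add sin_diff algebra_simps)
    moreover have "0 < r"
      using False by (simp add: r_def)
    ultimately have sin_signs: "0 \<le> sin (t + h)" "sin (t - h) \<le> 0"
      using lin by (simp_all add: zero_le_mult_iff mult_le_0_iff)
    have "- h \<le> t"
    proof (rule ccontr)
      assume "\<not> - h \<le> t"
      then have "0 < sin (- (t + h))"
        using t_bound assms by (intro sin_gt_zero) auto
      with sin_signs(1) show False
        by (simp only: sin_minus)
    qed
    moreover have "t \<le> h"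
    proof (rule ccontr)
      assume "\<not> t \<le> h"
      then have "0 < sin (t - h)"
        using t_bound assms by (intro sin_gt_zero) auto
      with sin_signs(2) show False
        by simp
    qed
    moreover have "0 \<le> r"
      by (simp add: r_def)
    ultimately show ?thesis
      by (subst z) (rule rcis_in_sector)
  qed
qed

text \<open>Rotating a sector of opening less than \<open>pi\<close> onto \<open>[-h, h]\<close> turns membership
  into three linear inequalities, which are preserved under addition.\<close>
lemma add_in_sector:
  assumes "z \<in> sector a b" "w \<in> sector a b" "b - a < pi"
  shows "z + w \<in> sector a b"
proof -
  define m where "m = (a + b) / 2"
  define h where "h = (b - a) / 2"
  have "a \<le> b"
    using assms(1) by (auto elim: sectorE)
  then have h: "0 \<le> h" "h < pi / 2"
    using assms(3) by (simp_all add: h_def)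
  have ends: "a + - m = - h" "b + - m = h" "- h + m = a" "h + m = b"
    by (simp_all add: m_def h_def field_simps)
  have rotate: "u * cis (- m) \<in> sector (- h) h" if "u \<in> sector a b" for u
    using mult_cis_in_sector[OF that, of "- m"] unfolding ends(1,2) .
  have "(z + w) * cis (- m) \<in> sector (- h) h"
    using rotate[OF assms(1)] rotate[OF assms(2)]
    unfolding sector_symmetric_iff[OF h] by (simp add: distrib_right mult.assoc)
  from mult_cis_in_sector[OF this, of m] show ?thesis
    unfolding ends(3,4) by (simp add: mult.assoc cis_mult)
qed

lemma sum_in_sector:
  assumes "finite I" "\<And>i. i \<in> I \<Longrightarrow> z i \<in> sector a b" "a \<le> b" "b - a < pi"
  shows "(\<Sum>i\<in>I. z i) \<in> sector a b"
  using assms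
proof (induction I rule: finite_induct)
  case empty
  then show ?case
    using rcis_in_sector[of 0 a a b] by simp
next
  case (insert i I)
  then show ?case
    by (simp add: add_in_sector)
qed

lemma csqrt_rcis:
  assumes "0 \<le> r" "\<bar>t\<bar> < pi"
  shows "csqrt (rcis r t) = rcis (sqrt r) (t / 2)"
proof (rule csqrt_unique)
  show "(rcis (sqrt r) (t / 2))\<^sup>2 = rcis r t"
    using assms by (simp add: DeMoivre2)
  have "0 < cos (t / 2)"
    using assms by (intro cos_gt_zero_pi) auto
  then show "0 < Re (rcis (sqrt r) (t / 2)) \<or> Re (rcis (sqrt r) (t / 2)) = 0 \<and> 0 \<le> Im (rcis (sqrt r) (t / 2))"
    using assms by (cases "r = 0") auto
qed

lemma csqrt_in_sector:
  assumes "z \<in> sector a b" "- pi < a" "b < pi"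
  shows "csqrt z \<in> sector (a / 2) (b / 2)"
proof -
  obtain r t where "0 \<le> r" "a \<le> t" "t \<le> b" and z: "z = rcis r t"
    using assms(1) by (rule sectorE)
  then have "csqrt z = rcis (sqrt r) (t / 2)"
    using assms by (simp add: csqrt_rcis)
  with \<open>0 \<le> r\<close> \<open>a \<le> t\<close> \<open>t \<le> b\<close> show ?thesis
    by (simp add: rcis_in_sector)
qed

lemma power2_in_sector_if_Sigma_tilde:
  assumes "z \<in> Sigma_tilde \<eta>"
  shows "z\<^sup>2 \<in> sector (- 2 * \<eta>) (2 * \<eta>)"
proof -
  define \<theta> where "\<theta> = Arg z"
  have z2: "z\<^sup>2 = rcis ((cmod z)\<^sup>2) (2 * \<theta>)"
    by (metis DeMoivre2 \<theta>_def of_nat_numeral rcis_cmod_Arg)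
  have "- pi < \<theta>" "\<theta> \<le> pi"
    using Arg_bounded \<theta>_def by auto
  have "\<bar>\<theta>\<bar> < \<eta> \<or> pi - \<eta> < \<bar>\<theta>\<bar>"
    using assms by (simp add: Sigma_tilde_def \<theta>_def)
  then consider "\<bar>\<theta>\<bar> < \<eta>" | "pi - \<eta> < \<theta>" | "\<theta> < - (pi - \<eta>)"
    by linarith
  then show ?thesis
  proof cases
    case 1
    then show ?thesis
      unfolding z2 by (intro rcis_in_sector) auto
  next
    case 2
    have "rcis ((cmod z)\<^sup>2) (2 * \<theta>) = rcis ((cmod z)\<^sup>2) (2 * \<theta> - 2 * pi)"
      by (simp add: rcis_def cis_divide[symmetric])
    with 2 \<open>\<theta> \<le> pi\<close> show ?thesis
      unfolding z2 by (auto intro!: rcis_in_sector)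
  next
    case 3
    have "rcis ((cmod z)\<^sup>2) (2 * \<theta>) = rcis ((cmod z)\<^sup>2) (2 * \<theta> + 2 * pi)"
      by (simp add: rcis_def cis_mult[symmetric])
    with 3 \<open>- pi < \<theta>\<close> show ?thesis
      unfolding z2 by (auto intro!: rcis_in_sector)
  qed
qed

lemma A_tilde_nonneg: "0 \<le> A_tilde \<xi>"
  by (simp add: A_tilde_def sum_nonneg)

lemma sum_power2_polar_if_Sigma_tilde:
  fixes \<xi> :: "complex ^ 'm"
  assumes "\<forall>j. \<xi> $ j \<in> Sigma_tilde \<eta>" "0 < \<eta>" "\<eta> < pi / 4"
  obtains \<sigma> s where "(\<Sum>j\<in>UNIV. (\<xi> $ j)\<^sup>2) = rcis \<sigma> s" "0 \<le> \<sigma>" "\<bar>s\<bar> \<le> 2 * \<eta>"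
    "sqrt (cos (2 * \<eta>)) * A_tilde \<xi> \<le> sqrt \<sigma>"
proof -
  define S where "S = (\<Sum>j\<in>UNIV. (\<xi> $ j)\<^sup>2)"
  have squares: "(\<xi> $ j)\<^sup>2 \<in> sector (- 2 * \<eta>) (2 * \<eta>)" for j
    using power2_in_sector_if_Sigma_tilde[OF assms(1)[rule_format]] .
  have "S \<in> sector (- 2 * \<eta>) (2 * \<eta>)"
    unfolding S_def using squares assms(2,3) by (intro sum_in_sector) auto
  then obtain \<sigma> s where "0 \<le> \<sigma>" "- 2 * \<eta> \<le> s" "s \<le> 2 * \<eta>" and S: "S = rcis \<sigma> s"
    by (auto elim: sectorE)
  have "2 * \<eta> \<le> pi"
    using assms(2,3) by linarith
  then have "cos (2 * \<eta>) * (\<Sum>j\<in>UNIV. (cmod (\<xi> $ j))\<^sup>2) \<le> cmod S"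
    using norm_sum_ge_in_sector[of UNIV "\<lambda>j. (\<xi> $ j)\<^sup>2", OF _ squares, of "2 * \<eta>"]
    by (simp add: S_def norm_power)
  then have "sqrt (cos (2 * \<eta>)) * A_tilde \<xi> \<le> sqrt \<sigma>"
    using \<open>0 \<le> \<sigma>\<close> by (simp add: A_tilde_def S real_sqrt_mult[symmetric])
  with that S \<open>0 \<le> \<sigma>\<close> \<open>- 2 * \<eta> \<le> s\<close> \<open>s \<le> 2 * \<eta>\<close> show ?thesis
    by (auto simp: S_def)
qed

lemma csqrt_combination_in_sector:
  fixes lam S :: complex
  assumes lam: "lam = rcis l \<phi>" "0 \<le> l" and S: "S = rcis \<sigma> s" "0 \<le> \<sigma>"
    and angles: "\<bar>\<phi>\<bar> < pi" "\<bar>s\<bar> < pi" "\<bar>\<phi> - s\<bar> \<le> W" "W < pi"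
    and "0 < a" "0 \<le> \<mu>\<^sub>1" "0 \<le> \<mu>\<^sub>2"
  defines "X \<equiv> of_real \<mu>\<^sub>1 * csqrt (of_real a * lam + S) + of_real \<mu>\<^sub>2 * csqrt S"
  shows "X \<in> sector (min \<phi> s / 2) (max \<phi> s / 2)" (is "X \<in> sector (?lo / 2) (?hi / 2)")
    and "cos (W / 4) * min (\<mu>\<^sub>1 * sqrt (cos (W / 2) * a)) \<mu>\<^sub>2 * (sqrt l + sqrt \<sigma>) \<le> cmod X"
proof -
  define lo hi where "lo = ?lo" and "hi = ?hi"
  have lohi: "- pi < lo" "hi < pi" "lo \<le> \<phi>" "\<phi> \<le> hi" "lo \<le> s" "s \<le> hi" "hi - lo \<le> W"
    using angles by (auto simp: lo_def hi_def)
  define Z where "Z = of_real a * lam + S"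
  have "of_real a * lam \<in> sector lo hi" "S \<in> sector lo hi"
    using lam S lohi \<open>0 < a\<close> by (auto intro!: of_real_mult_in_sector rcis_in_sector)
  then have "Z \<in> sector lo hi" "cos (W / 2) * (a * l + \<sigma>) \<le> cmod Z"
    using norm_add_ge_in_sector[of "of_real a * lam" lo hi S "W / 2"] lam S lohi \<open>0 < a\<close> \<open>W < pi\<close>
    by (auto simp: Z_def norm_mult intro: add_in_sector)
  have cos_pos: "0 < cos (W / 2)" "0 < cos (W / 4)"
    using lohi \<open>W < pi\<close> by (auto intro!: cos_gt_zero_pi)
  have "cos (W / 2) * a * l \<le> cos (W / 2) * (a * l + \<sigma>)"
    using cos_pos \<open>0 \<le> \<sigma>\<close> by (simp add: algebra_simps)
  also have "\<dots> \<le> cmod Z"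
    by fact
  finally have B_norm: "sqrt (cos (W / 2) * a) * sqrt l \<le> cmod (csqrt Z)"
    by (simp add: real_sqrt_mult[symmetric] real_sqrt_le_mono)
  have sectors: "csqrt Z \<in> sector (lo / 2) (hi / 2)" "csqrt S \<in> sector (lo / 2) (hi / 2)"
    using csqrt_in_sector[OF \<open>Z \<in> sector lo hi\<close>] csqrt_in_sector[OF \<open>S \<in> sector lo hi\<close>] lohi
    by auto
  then show "X \<in> sector (lo / 2) (hi / 2)"
    unfolding X_def Z_def[symmetric] using lohi \<open>0 \<le> \<mu>\<^sub>1\<close> \<open>0 \<le> \<mu>\<^sub>2\<close>
    by (intro add_in_sector of_real_mult_in_sector) auto
  have "min (\<mu>\<^sub>1 * sqrt (cos (W / 2) * a)) \<mu>\<^sub>2 * (sqrt l + sqrt \<sigma>)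
      \<le> \<mu>\<^sub>1 * sqrt (cos (W / 2) * a) * sqrt l + \<mu>\<^sub>2 * sqrt \<sigma>"
    unfolding distrib_left using \<open>0 \<le> l\<close> \<open>0 \<le> \<sigma>\<close> by (intro add_mono mult_right_mono) auto
  also have "\<dots> \<le> \<mu>\<^sub>1 * cmod (csqrt Z) + \<mu>\<^sub>2 * cmod (csqrt S)"
    using B_norm \<open>0 \<le> \<mu>\<^sub>1\<close> S by (simp add: mult.assoc mult_left_mono)
  finally have "cos (W / 4) * min (\<mu>\<^sub>1 * sqrt (cos (W / 2) * a)) \<mu>\<^sub>2 * (sqrt l + sqrt \<sigma>)
      \<le> cos (W / 4) * (cmod (of_real \<mu>\<^sub>1 * csqrt Z) + cmod (of_real \<mu>\<^sub>2 * csqrt S))"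
    using cos_pos \<open>0 \<le> \<mu>\<^sub>1\<close> \<open>0 \<le> \<mu>\<^sub>2\<close> by (simp add: norm_mult mult.assoc mult_left_mono)
  also have "\<dots> \<le> cmod X"
    unfolding X_def Z_def[symmetric] using sectors lohi \<open>0 \<le> \<mu>\<^sub>1\<close> \<open>0 \<le> \<mu>\<^sub>2\<close> \<open>W < pi\<close>
    by (intro norm_add_ge_in_sector of_real_mult_in_sector) auto
  finally show "cos (W / 4) * min (\<mu>\<^sub>1 * sqrt (cos (W / 2) * a)) \<mu>\<^sub>2 * (sqrt l + sqrt \<sigma>) \<le> cmod X" .
qed

lemma norm_det_L_form_ge:
  fixes lam A X Y :: complex
  assumes lam: "lam = rcis l \<phi>" "0 \<le> l" and "0 \<le> R"
    and A: "A \<in> sector (s / 2) (s / 2)"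
    and X: "X \<in> sector (min \<phi> s / 2) (max \<phi> s / 2)" "X \<noteq> 0"
    and Y: "Y \<in> sector (min \<phi> s / 2) (max \<phi> s / 2)" "Y \<noteq> 0"
    and angles: "\<bar>\<phi> - s\<bar> \<le> W" "W \<le> pi"
  shows "cos (W / 2) * (R * l * (cmod X + cmod Y) + 4 * cmod A * cmod X * cmod Y)
    \<le> cmod (of_real R * lam * (X + Y) + 4 * A * X * Y)"
proof -
  define D where "D = sector (\<phi> / 2 - W / 2) (\<phi> / 2 + W / 2)"
  have Rlam: "of_real R * lam = rcis (R * l) \<phi>"
    by (simp add: lam rcis_def mult.assoc)
  have "sector (\<phi> - max \<phi> s / 2) (\<phi> - min \<phi> s / 2) \<subseteq> D"
    unfolding D_def using angles by (intro sector_mono) (auto simp: min_def max_def)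
  then have quotient_in_D: "of_real R * lam / Z \<in> D" if "Z \<in> sector (min \<phi> s / 2) (max \<phi> s / 2)" for Z
    unfolding Rlam using divide_in_sector[OF that, of "R * l" \<phi>] \<open>0 \<le> R\<close> \<open>0 \<le> l\<close> by auto
  have "sector (s / 2) (s / 2) \<subseteq> D"
    unfolding D_def using angles by (intro sector_mono) (auto simp: abs_le_iff)
  then have "4 * A \<in> D"
    using of_real_mult_in_sector[OF A, of 4] by auto
  define T1 T2 where "T1 = of_real R * lam / X" and "T2 = of_real R * lam / Y"
  have "cos (W / 2) * (cmod T1 + cmod T2 + cmod (4 * A))
      \<le> Re (T1 * cis (- (\<phi> / 2))) + Re (T2 * cis (- (\<phi> / 2))) + Re (4 * A * cis (- (\<phi> / 2)))"
    unfolding distrib_left using quotient_in_D[OF X(1)] quotient_in_D[OF Y(1)] \<open>4 * A \<in> D\<close> angles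
    by (intro add_mono Re_mult_cis_ge_in_sector) (auto simp: D_def T1_def T2_def)
  also have "\<dots> \<le> cmod ((T1 + T2 + 4 * A) * cis (- (\<phi> / 2)))"
    by (metis complex_Re_le_cmod distrib_right plus_complex.sel(1))
  finally have T_bound: "cos (W / 2) * (R * l / cmod X + R * l / cmod Y + 4 * cmod A) \<le> cmod (T1 + T2 + 4 * A)"
    using \<open>0 \<le> R\<close> lam by (simp add: T1_def T2_def norm_mult norm_divide abs_mult)
  have "cos (W / 2) * (R * l * (cmod X + cmod Y) + 4 * cmod A * cmod X * cmod Y)
      = cmod X * cmod Y * (cos (W / 2) * (R * l / cmod X + R * l / cmod Y + 4 * cmod A))"
    using X(2) Y(2) by (simp add: field_simps)
  also have "\<dots> \<le> cmod X * cmod Y * cmod (T1 + T2 + 4 * A)"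
    using T_bound by (simp add: mult_left_mono)
  also have "\<dots> = cmod (X * Y * (T1 + T2 + 4 * A))"
    by (simp add: norm_mult)
  also have "X * Y * (T1 + T2 + 4 * A) = of_real R * lam * (X + Y) + 4 * A * X * Y"
    using X(2) Y(2) by (simp add: T1_def T2_def field_simps)
  finally show ?thesis .
qed

lemma cube_le_of_lower_bounds:
  fixes u v x y p q R :: real
  assumes "0 \<le> u" "0 \<le> v" "0 \<le> p" "0 \<le> q" "0 \<le> R" "p * (u + v) \<le> x" "q * (u + v) \<le> y"
  shows "p * min R (4 * q) / 2 * (u + v) ^ 3 \<le> R * u\<^sup>2 * (x + y) + 4 * v * x * y"
proof -
  have "0 \<le> x" "0 \<le> y"
    using assms by (meson add_nonneg_nonneg mult_nonneg_nonneg order_trans)+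
  have square: "(u + v)\<^sup>2 \<le> 2 * (u\<^sup>2 + v * (u + v))"
    using assms(1,2) by (simp add: power2_eq_square algebra_simps)
  have "min R (4 * q) / 2 * (u + v)\<^sup>2 \<le> min R (4 * q) * (u\<^sup>2 + v * (u + v))"
    using mult_left_mono[OF square, of "min R (4 * q) / 2"] assms(4,5) by (simp add: algebra_simps)
  also have "\<dots> \<le> R * u\<^sup>2 + 4 * q * (v * (u + v))"
    unfolding distrib_left using assms(1,2) by (intro add_mono mult_right_mono) auto
  also have "\<dots> \<le> R * u\<^sup>2 + 4 * v * y"
    using mult_left_mono[OF assms(7) assms(2)] by (simp add: algebra_simps)
  finally have second: "min R (4 * q) / 2 * (u + v)\<^sup>2 \<le> R * u\<^sup>2 + 4 * v * y" .
  have "p * min R (4 * q) / 2 * (u + v) ^ 3 = p * (u + v) * (min R (4 * q) / 2 * (u + v)\<^sup>2)"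
    by (simp add: power2_eq_square power3_eq_cube)
  also have "\<dots> \<le> x * (R * u\<^sup>2 + 4 * v * y)"
    using second assms \<open>0 \<le> x\<close> by (intro mult_mono) auto
  also have "\<dots> \<le> R * u\<^sup>2 * (x + y) + 4 * v * x * y"
    using assms \<open>0 \<le> y\<close> by (simp add: algebra_simps)
  finally show ?thesis .
qed

lemma vector_4 [simp]:
 "(vector [x,y,z,w] ::('a::zero)^4)$1 = x"
 "(vector [x,y,z,w] ::('a::zero)^4)$2 = y"
 "(vector [x,y,z,w] ::('a::zero)^4)$3 = z"
 "(vector [x,y,z,w] ::('a::zero)^4)$4 = w"
  unfolding vector_def by simp_all

lemma det_4:
  "det (A::'a::comm_ring_1^4^4) =
    A$1$1 * A$2$2 * A$3$3 * A$4$4 - A$1$1 * A$2$2 * A$3$4 * A$4$3 - A$1$1 * A$2$3 * A$3$2 * A$4$4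
    + A$1$1 * A$2$3 * A$3$4 * A$4$2 + A$1$1 * A$2$4 * A$3$2 * A$4$3 - A$1$1 * A$2$4 * A$3$3 * A$4$2
    - A$1$2 * A$2$1 * A$3$3 * A$4$4 + A$1$2 * A$2$1 * A$3$4 * A$4$3 + A$1$2 * A$2$3 * A$3$1 * A$4$4
    - A$1$2 * A$2$3 * A$3$4 * A$4$1 - A$1$2 * A$2$4 * A$3$1 * A$4$3 + A$1$2 * A$2$4 * A$3$3 * A$4$1
    + A$1$3 * A$2$1 * A$3$2 * A$4$4 - A$1$3 * A$2$1 * A$3$4 * A$4$2 - A$1$3 * A$2$2 * A$3$1 * A$4$4
    + A$1$3 * A$2$2 * A$3$4 * A$4$1 + A$1$3 * A$2$4 * A$3$1 * A$4$2 - A$1$3 * A$2$4 * A$3$2 * A$4$1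
    - A$1$4 * A$2$1 * A$3$2 * A$4$3 + A$1$4 * A$2$1 * A$3$3 * A$4$2 + A$1$4 * A$2$2 * A$3$1 * A$4$3
    - A$1$4 * A$2$2 * A$3$3 * A$4$1 - A$1$4 * A$2$3 * A$3$1 * A$4$2 + A$1$4 * A$2$3 * A$3$2 * A$4$1"
proof -
  have f1: "finite {2::4, 3, 4}" "1 \<notin> {2::4, 3, 4}" by auto
  have f2: "finite {3::4, 4}" "2 \<notin> {3::4, 4}" by auto
  have f3: "finite {4::4}" "3 \<notin> {4::4}" by auto
  show ?thesis
    unfolding det_def UNIV_4
    unfolding sum_over_permutations_insert[OF f1]
    unfolding sum_over_permutations_insert[OF f2]
    unfolding sum_over_permutations_insert[OF f3]
    unfolding permutes_sing
    by (simp add: sign_swap_id permutation_swap_id sign_compose permutation_compose sign_id swap_id_eq algebra_simps)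
qed

lemma det_L_mat_eq:
  fixes \<xi> :: "complex ^ 'm" and lam :: complex and \<rho>p \<rho>m \<mu>p \<mu>m :: real
  assumes "\<mu>p > 0" "\<mu>m > 0"
  defines "A \<equiv> A_sym \<xi>" and "Bp \<equiv> B_sym \<rho>p \<mu>p lam \<xi>" and "Bm \<equiv> B_sym \<rho>m \<mu>m lam \<xi>"
  shows "det (L_mat \<rho>p \<rho>m \<mu>p \<mu>m lam \<xi>) =
    of_real (\<rho>p + \<rho>m) * lam * ((of_real \<mu>p * Bp + of_real \<mu>m * A) + (of_real \<mu>m * Bm + of_real \<mu>p * A))
    + 4 * A * (of_real \<mu>p * Bp + of_real \<mu>m * A) * (of_real \<mu>m * Bm + of_real \<mu>p * A)"
proof -
  have "of_real \<rho>p * lam = of_real \<mu>p * (Bp\<^sup>2 - A\<^sup>2)" "of_real \<rho>m * lam = of_real \<mu>m * (Bm\<^sup>2 - A\<^sup>2)"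
    using assms(1,2) by (simp_all add: Bp_def Bm_def B_sym_def A_def of_real_divide field_simps)
  then have lam_eq: "of_real (\<rho>p + \<rho>m) * lam = of_real \<mu>p * (Bp\<^sup>2 - A\<^sup>2) + of_real \<mu>m * (Bm\<^sup>2 - A\<^sup>2)"
    by (simp add: distrib_right)
  show ?thesis
    unfolding lam_eq
    by (simp add: det_4 L_mat_def Let_def flip: A_def Bp_def Bm_def)
      (simp add: algebra_simps power2_eq_square power3_eq_cube)
qed

lemma norm_det_L_mat_ge_polar:
  fixes \<xi> :: "complex ^ 'm"
  assumes "0 < \<rho>p" "0 < \<rho>m" "0 < \<mu>p" "0 < \<mu>m"
    and lam: "lam = rcis l \<phi>" "0 < l" and S: "(\<Sum>j\<in>UNIV. (\<xi> $ j)\<^sup>2) = rcis \<sigma> s" "0 \<le> \<sigma>"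
    and angles: "\<bar>\<phi>\<bar> < pi" "\<bar>s\<bar> < pi" "\<bar>\<phi> - s\<bar> \<le> W" "W < pi"
  defines "p \<equiv> cos (W / 4) * min (\<mu>p * sqrt (cos (W / 2) * (\<rho>p / \<mu>p))) \<mu>m"
    and "q \<equiv> cos (W / 4) * min (\<mu>m * sqrt (cos (W / 2) * (\<rho>m / \<mu>m))) \<mu>p"
  shows "cos (W / 2) * (p * min (\<rho>p + \<rho>m) (4 * q) / 2) * (sqrt l + sqrt \<sigma>) ^ 3
    \<le> cmod (det (L_mat \<rho>p \<rho>m \<mu>p \<mu>m lam \<xi>))"
proof -
  define R where "R = \<rho>p + \<rho>m"
  have cos_pos: "0 < cos (W / 2)" "0 < cos (W / 4)"
    using angles by (auto intro!: cos_gt_zero_pi)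
  then have "0 < p" "0 < q" "0 < R"
    using assms(1-4) by (auto simp: p_def q_def R_def)
  define A where "A = A_sym \<xi>"
  define X where "X = of_real \<mu>p * B_sym \<rho>p \<mu>p lam \<xi> + of_real \<mu>m * A"
  define Y where "Y = of_real \<mu>m * B_sym \<rho>m \<mu>m lam \<xi> + of_real \<mu>p * A"
  have A_sym_eq: "A_sym \<xi> = csqrt (rcis \<sigma> s)" "(A_sym \<xi>)\<^sup>2 = rcis \<sigma> s"
    by (simp_all add: A_sym_def S(1))
  have "A = rcis (sqrt \<sigma>) (s / 2)"
    using A_sym_eq(1) S(2) angles(2) by (simp add: A_def csqrt_rcis)
  then have A_sector: "A \<in> sector (s / 2) (s / 2)" and A_norm: "cmod A = sqrt \<sigma>"
    using S(2) by (simp_all add: rcis_in_sector)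
  have X: "X \<in> sector (min \<phi> s / 2) (max \<phi> s / 2)" "p * (sqrt l + sqrt \<sigma>) \<le> cmod X"
    unfolding X_def A_def B_sym_def A_sym_eq(2) p_def unfolding A_sym_eq(1)
    using csqrt_combination_in_sector[OF lam(1) _ refl S(2) angles,
        where a = "\<rho>p / \<mu>p" and \<mu>\<^sub>1 = \<mu>p and \<mu>\<^sub>2 = \<mu>m] lam(2) assms(1-4)
    by auto
  have Y: "Y \<in> sector (min \<phi> s / 2) (max \<phi> s / 2)" "q * (sqrt l + sqrt \<sigma>) \<le> cmod Y"
    unfolding Y_def A_def B_sym_def A_sym_eq(2) q_def unfolding A_sym_eq(1)
    using csqrt_combination_in_sector[OF lam(1) _ refl S(2) angles,
        where a = "\<rho>m / \<mu>m" and \<mu>\<^sub>1 = \<mu>m and \<mu>\<^sub>2 = \<mu>p] lam(2) assms(1-4)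
    by auto
  have "0 < sqrt l + sqrt \<sigma>"
    using lam(2) S(2) by (simp add: add_pos_nonneg)
  then have "0 < p * (sqrt l + sqrt \<sigma>)" "0 < q * (sqrt l + sqrt \<sigma>)"
    using \<open>0 < p\<close> \<open>0 < q\<close> by simp_all
  then have "X \<noteq> 0" "Y \<noteq> 0"
    using X(2) Y(2) by auto
  have "p * min R (4 * q) / 2 * (sqrt l + sqrt \<sigma>) ^ 3
      \<le> R * l * (cmod X + cmod Y) + 4 * sqrt \<sigma> * cmod X * cmod Y"
    using cube_le_of_lower_bounds[OF _ _ _ _ _ X(2) Y(2), of R] \<open>0 < p\<close> \<open>0 < q\<close> \<open>0 < R\<close>
      lam(2) S(2)
    by simp
  then have "cos (W / 2) * (p * min R (4 * q) / 2) * (sqrt l + sqrt \<sigma>) ^ 3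
      \<le> cos (W / 2) * (R * l * (cmod X + cmod Y) + 4 * cmod A * cmod X * cmod Y)"
    using cos_pos A_norm by (simp add: mult.assoc mult_left_mono)
  also have "\<dots> \<le> cmod (of_real R * lam * (X + Y) + 4 * A * X * Y)"
    using norm_det_L_form_ge[OF lam(1) _ _ A_sector X(1) \<open>X \<noteq> 0\<close> Y(1) \<open>Y \<noteq> 0\<close> angles(3)]
      lam(2) \<open>0 < R\<close> angles(4)
    by simp
  also have "of_real R * lam * (X + Y) + 4 * A * X * Y = det (L_mat \<rho>p \<rho>m \<mu>p \<mu>m lam \<xi>)"
    unfolding det_L_mat_eq[OF assms(3,4)] R_def X_def Y_def A_def by simp
  finally show ?thesis
    by (simp only: R_def)
qed

theorem lemma5p3:
  fixes \<rho>p \<rho>m \<mu>p \<mu>m \<epsilon> \<eta> :: real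
  assumes "\<rho>p > 0" "\<rho>m > 0" "\<mu>p > 0" "\<mu>m > 0"
    and "0 < \<epsilon>" "\<epsilon> < pi / 2"
    and "0 < \<eta>" "\<eta> < min (pi / 4) (\<epsilon> / 2)"
  shows "\<exists>c > 0. \<forall>lam \<in> Sigma_sec \<epsilon>. \<forall>\<xi> :: complex ^ 'm.
           (\<forall>j. \<xi> $ j \<in> Sigma_tilde \<eta>) \<longrightarrow>
           c * (sqrt (cmod lam) + A_tilde \<xi>) ^ 3 \<le> cmod (det (L_mat \<rho>p \<rho>m \<mu>p \<mu>m lam \<xi>))"
proof -
  define W where "W = pi - \<epsilon> + 2 * \<eta>"
  have W: "0 \<le> W" "W < pi"
    using assms(6-8) by (auto simp: W_def)
  define p q where "p = cos (W / 4) * min (\<mu>p * sqrt (cos (W / 2) * (\<rho>p / \<mu>p))) \<mu>m"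
    and "q = cos (W / 4) * min (\<mu>m * sqrt (cos (W / 2) * (\<rho>m / \<mu>m))) \<mu>p"
  define c where "c = cos (W / 2) * (p * min (\<rho>p + \<rho>m) (4 * q) / 2)"
  define \<kappa> where "\<kappa> = sqrt (cos (2 * \<eta>))"
  have "0 < cos (W / 2)" "0 < cos (W / 4)"
    using W by (auto intro!: cos_gt_zero_pi)
  then have "0 < c"
    using assms(1-4) by (simp add: c_def p_def q_def)
  have "0 < \<kappa>" "\<kappa> \<le> 1"
    using assms(7,8) by (auto simp: \<kappa>_def intro!: cos_gt_zero_pi)
  show ?thesis
  proof (intro exI[of _ "c * \<kappa> ^ 3"] conjI ballI allI impI)
    show "0 < c * \<kappa> ^ 3"
      using \<open>0 < c\<close> \<open>0 < \<kappa>\<close> by simp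
    fix lam and \<xi> :: "complex ^ 'm"
    assume lam: "lam \<in> Sigma_sec \<epsilon>" and \<xi>: "\<forall>j. \<xi> $ j \<in> Sigma_tilde \<eta>"
    obtain \<sigma> s where S: "(\<Sum>j\<in>UNIV. (\<xi> $ j)\<^sup>2) = rcis \<sigma> s" "0 \<le> \<sigma>" "\<bar>s\<bar> \<le> 2 * \<eta>"
      and A_tilde_le: "\<kappa> * A_tilde \<xi> \<le> sqrt \<sigma>"
      using sum_power2_polar_if_Sigma_tilde[OF \<xi> assms(7)] assms(8) unfolding \<kappa>_def by auto
    have "lam = rcis (cmod lam) (Arg lam)" "0 < cmod lam" "\<bar>Arg lam\<bar> < pi - \<epsilon>"
      using lam by (auto simp: Sigma_sec_def rcis_cmod_Arg)
    then have bound: "c * (sqrt (cmod lam) + sqrt \<sigma>) ^ 3 \<le> cmod (det (L_mat \<rho>p \<rho>m \<mu>p \<mu>m lam \<xi>))"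
      unfolding c_def p_def q_def using S assms W
      by (intro norm_det_L_mat_ge_polar) (auto simp: W_def)
    have "\<kappa> * (sqrt (cmod lam) + A_tilde \<xi>) \<le> sqrt (cmod lam) + sqrt \<sigma>"
      using A_tilde_le mult_left_le_one_le[of "sqrt (cmod lam)" \<kappa>] \<open>0 < \<kappa>\<close> \<open>\<kappa> \<le> 1\<close>
      by (simp add: distrib_left)
    then have "(\<kappa> * (sqrt (cmod lam) + A_tilde \<xi>)) ^ 3 \<le> (sqrt (cmod lam) + sqrt \<sigma>) ^ 3"
      using \<open>0 < \<kappa>\<close> A_tilde_nonneg[of \<xi>] by (intro power_mono) auto
    then have "c * \<kappa> ^ 3 * (sqrt (cmod lam) + A_tilde \<xi>) ^ 3 \<le> c * (sqrt (cmod lam) + sqrt \<sigma>) ^ 3"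
      using \<open>0 < c\<close> by (simp add: power_mult_distrib mult.assoc mult_left_mono)
    with bound show "c * \<kappa> ^ 3 * (sqrt (cmod lam) + A_tilde \<xi>) ^ 3
        \<le> cmod (det (L_mat \<rho>p \<rho>m \<mu>p \<mu>m lam \<xi>))"
      by linarith
  qed
qed

end
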